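(* Let $d,m$ be positive integers, let $a<b$ be real numbers and $\epsilon>0$, and let $T:\mathrm{MR}_d\to\mathrm{MR}_m$ be an affine linear operator which sends $[a,b]$-rooted polynomials to real-rooted polynomials. Let $\mathcal{A}$ be the set of all $[a,b]$-rooted $f\in\mathrm{MR}_d$ with $\operatorname{tr}(f)=\epsilon$ (assumed nonempty), and consider the problem of maximizing the largest zero of $T(f)$ over $f\in\mathcal{A}$. Then this maximal zero is achieved for some $T(f)$ with $f\in\mathcal{A}$ having at most one distinct zero in $(a,b)$. Moreover, if the maximal zero above is achieved for some $T(f)$ where $f\in\mathcal{A}$ is $(a,b)$-rooted, then the maximal zero is also achieved for $T\big((t-\epsilon/d)^d\big)$.
   Context: $\mathrm{MR}_d$ denotes the affine space of all monic real univariate polynomials of degree $d$. For an interval $I\subseteq\mathbb{R}$, a polynomial is $I$-rooted if all its zeros lie in $I$. The trace $\operatorname{tr}(f)$ of a non-constant polynomial $f$ is the sum of its zeros counted with multiplicity. *)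

theory Defs
  imports Complex_Main "HOL-Computational_Algebra.Computational_Algebra"
begin

definition MR :: "nat \<Rightarrow> real poly set" where
  "MR d = {f. degree f = d \<and> lead_coeff f = 1}"

definition czeros :: "real poly \<Rightarrow> complex set" where
  "czeros f = {z. poly (map_poly complex_of_real f) z = 0}"

definition rooted_in :: "real set \<Rightarrow> real poly \<Rightarrow> bool" where
  "rooted_in I f \<longleftrightarrow> czeros f \<subseteq> complex_of_real ` I"

abbreviation real_rooted :: "real poly \<Rightarrow> bool" where
  "real_rooted f \<equiv> rooted_in UNIV f"

definition tr :: "real poly \<Rightarrow> complex" where
  "tr f = sum_mset (proots (map_poly complex_of_real f))"

definition maxroot :: "real poly \<Rightarrow> real" where
  "maxroot p = Max {x. poly p x = 0}"

definition affine_op :: "nat \<Rightarrow> nat \<Rightarrow> (real poly \<Rightarrow> real poly) \<Rightarrow> bool" where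
  "affine_op d m T \<longleftrightarrow> (\<forall>f\<in>MR d. T f \<in> MR m) \<and>
     (\<forall>f\<in>MR d. \<forall>g\<in>MR d. \<forall>c::real.
        T (smult c f + smult (1 - c) g) = smult c (T f) + smult (1 - c) (T g))"

end

theory Submission
  imports Defs
begin

text \<open>
  Write an [a,b]-rooted f as the product of (t - z) over its multiset of roots. If two roots u, v
  are replaced while keeping u + v fixed, f moves on an affine line parametrised by u v, and so does
  T f. Along such a line the largest zero behaves like a quasi-convex function: at the largest zero
  of an intermediate member, the two outer members cannot both be positive, so if the left one
  does not beat the middle one, the right one does. Given two interior roots x < \<mu> < y, \<mu> the
  mean of the interior roots, we may therefore either push them apart until one reaches a or b, or
  pull them together until one reaches \<mu>, without decreasing the largest zero of T f. The first
  move lowers the number of interior roots, the second the number of interior roots off their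
  mean, so we end at a polynomial with at most one distinct interior root. There are only
  finitely many of those, and they contain a maximiser. If a maximiser has all roots in (a,b),
  spreading cannot increase the value, so squeezing keeps it maximal, and repeating this reaches
  (t - \<epsilon>/d)^d.
\<close>

definition root_poly :: "real multiset \<Rightarrow> real poly" where
  "root_poly R = (\<Prod>z\<in>#R. [:-z, 1:])"

lemma poly_root_poly: "poly (root_poly R) t = (\<Prod>z\<in>#R. t - z)"
  unfolding root_poly_def by (simp add: poly_prod_mset)

lemma root_poly_add: "root_poly (R + S) = root_poly R * root_poly S"
  unfolding root_poly_def by simp

lemma root_poly_add_mset: "root_poly (add_mset x R) = [:-x, 1:] * root_poly R"
  unfolding root_poly_def by simp

lemma root_poly_replicate_mset: "root_poly (replicate_mset n c) = [:-c, 1:] ^ n"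
  unfolding root_poly_def by simp

lemma root_poly_add_pair: "root_poly (S + {#u, v#}) = root_poly S * [:u * v, -(u + v), 1:]"
proof -
  have "root_poly {#u, v#} = [:u * v, -(u + v), 1:]"
    by (simp add: root_poly_def algebra_simps)
  then show ?thesis
    by (simp only: root_poly_add)
qed

lemma root_poly_in_MR: "root_poly R \<in> MR (size R)"
proof (induction R)
  case (add x R)
  have "root_poly R \<noteq> 0"
    by (auto simp: root_poly_def)
  then have "degree ([:-x, 1:] * root_poly R) = Suc (size R)"
    using add by (subst degree_mult_eq) (auto simp: MR_def)
  moreover have "lead_coeff ([:-x, 1:] * root_poly R) = 1"
    using add by (simp only: lead_coeff_mult) (auto simp: MR_def)
  ultimately show ?case
    by (simp add: MR_def root_poly_add_mset del: mult_pCons_left)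
qed (simp add: MR_def root_poly_def)

lemma real_roots_root_poly: "{x. poly (root_poly R) x = 0} = set_mset R"
  by (auto simp: poly_root_poly)

lemma poly_root_poly_pos: "(\<forall>z\<in>#R. z < t) \<Longrightarrow> 0 < poly (root_poly R) t"
  unfolding poly_root_poly by (induction R) auto

lemma maxroot_root_poly_mem: "R \<noteq> {#} \<Longrightarrow> maxroot (root_poly R) \<in># R"
  unfolding maxroot_def real_roots_root_poly by (rule Max_in) auto

lemma maxroot_root_poly_ge: "z \<in># R \<Longrightarrow> z \<le> maxroot (root_poly R)"
  unfolding maxroot_def real_roots_root_poly by (rule Max_ge) auto

lemma map_poly_of_real_mult:
  "map_poly complex_of_real (p * q) = map_poly complex_of_real p * map_poly complex_of_real q"
  by (intro poly_eqI) (simp add: coeff_map_poly coeff_mult)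

lemma map_poly_of_real_inject:
  "map_poly complex_of_real p = map_poly complex_of_real q \<Longrightarrow> p = q"
  by (metis (no_types) coeff_map_poly of_real_0 of_real_eq_iff poly_eqI)

lemma map_poly_of_real_root_poly:
  "map_poly complex_of_real (root_poly R) = (\<Prod>z\<in>#image_mset complex_of_real R. [:-z, 1:])"
proof (induction R)
  case (add x R)
  then show ?case
    by (simp add: root_poly_add_mset map_poly_of_real_mult map_poly_pCons del: mult_pCons_left)
qed (simp add: root_poly_def)

lemma proots_prod_linear_factors: "proots (\<Prod>z\<in>#Q. [:-z, 1:]) = (Q :: complex multiset)"
proof (induction Q)
  case (add x Q)
  have "(\<Prod>z\<in>#Q. [:-z, 1:]) \<noteq> 0"
    by auto
  with add show ?case
    by (simp add: proots_mult del: mult_pCons_left)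
qed simp

lemma czeros_root_poly: "czeros (root_poly R) = complex_of_real ` set_mset R"
  by (auto simp: czeros_def map_poly_of_real_root_poly poly_prod_mset)

lemma rooted_in_root_poly_iff: "rooted_in I (root_poly R) \<longleftrightarrow> set_mset R \<subseteq> I"
  by (auto simp: rooted_in_def czeros_root_poly inj_image_subset_iff[OF inj_of_real])

lemma tr_root_poly: "tr (root_poly R) = complex_of_real (sum_mset R)"
proof -
  have "complex_of_real (sum_mset R) = sum_mset (image_mset complex_of_real R)"
    by (induction R) simp_all
  then show ?thesis
    by (simp add: tr_def map_poly_of_real_root_poly proots_prod_linear_factors)
qed

lemma MR_rooted_in_iff:
  "f \<in> MR d \<and> rooted_in I f \<longleftrightarrow> (\<exists>R. f = root_poly R \<and> size R = d \<and> set_mset R \<subseteq> I)"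
proof
  assume f: "f \<in> MR d \<and> rooted_in I f"
  define F where "F = map_poly complex_of_real f"
  have lead_F: "lead_coeff F = 1" and "degree F = d"
    using f by (auto simp: MR_def F_def degree_map_poly coeff_map_poly)
  have "F \<noteq> 0"
    using lead_F by auto
  have real_root: "z = complex_of_real (Re z)" "Re z \<in> I" if "z \<in># proots F" for z
  proof -
    have "z \<in> czeros f"
      using that \<open>F \<noteq> 0\<close> by (simp add: czeros_def F_def)
    then obtain r where "r \<in> I" "z = complex_of_real r"
      using f by (auto simp: rooted_in_def)
    then show "z = complex_of_real (Re z)" "Re z \<in> I"
      by simp_all
  qed
  define R where "R = image_mset Re (proots F)"
  have "image_mset complex_of_real R = proots F"
    unfolding R_def multiset.map_comp o_def
    by (subst (2) multiset.map_ident[symmetric]) (rule image_mset_cong, use real_root in auto)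
  then have "map_poly complex_of_real (root_poly R) = F"
    using complex_poly_decompose_multiset[of F] lead_F by (simp add: map_poly_of_real_root_poly)
  then have "f = root_poly R"
    unfolding F_def by (rule map_poly_of_real_inject[symmetric])
  moreover have "size R = d"
    using \<open>degree F = d\<close> by (simp add: R_def size_proots_complex)
  moreover have "set_mset R \<subseteq> I"
    using real_root by (auto simp: R_def)
  ultimately show "\<exists>R. f = root_poly R \<and> size R = d \<and> set_mset R \<subseteq> I"
    by blast
next
  assume "\<exists>R. f = root_poly R \<and> size R = d \<and> set_mset R \<subseteq> I"
  then show "f \<in> MR d \<and> rooted_in I f"
    using root_poly_in_MR by (auto simp: rooted_in_root_poly_iff)
qed

lemma MR_real_rooted_eq_root_poly:
  assumes "p \<in> MR m" "real_rooted p"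
  obtains R where "p = root_poly R" "size R = m"
  using assms MR_rooted_in_iff[of p m UNIV] by blast

lemma poly_maxroot_eq_0:
  assumes "p \<in> MR m" "0 < m" "real_rooted p"
  shows "poly p (maxroot p) = 0"
proof -
  obtain R where R: "p = root_poly R" "size R = m"
    using MR_real_rooted_eq_root_poly[OF assms(1,3)] .
  then have "R \<noteq> {#}"
    using assms(2) by auto
  then have "maxroot p \<in> {x. poly p x = 0}"
    unfolding R(1) real_roots_root_poly by (rule maxroot_root_poly_mem)
  then show ?thesis
    by simp
qed

lemma poly_pos_above_maxroot:
  assumes "p \<in> MR m" "real_rooted p" "maxroot p < t"
  shows "0 < poly p t"
proof -
  obtain R where R: "p = root_poly R"
    using MR_real_rooted_eq_root_poly[OF assms(1,2)] .
  have "z < t" if "z \<in># R" for z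
    using maxroot_root_poly_ge[OF that] assms(3) R by simp
  then show ?thesis
    using R poly_root_poly_pos by blast
qed

lemma maxroot_convex_combination:
  assumes "p \<in> MR m" "q \<in> MR m" "r \<in> MR m" "0 < m"
    and "real_rooted p" "real_rooted q" "real_rooted r"
    and comb: "\<And>t. poly q t = c * poly p t + (1 - c) * poly r t" and "0 < c" "c < 1"
    and "maxroot p \<le> maxroot q"
  shows "maxroot q \<le> maxroot r"
proof (rule ccontr)
  let ?t = "maxroot q"
  assume "\<not> ?t \<le> maxroot r"
  then have r_pos: "0 < poly r ?t"
    using poly_pos_above_maxroot[OF assms(3,7)] by simp
  have q_root: "poly q ?t = 0"
    using poly_maxroot_eq_0[OF assms(2,4,6)] .
  have "maxroot p = ?t"
  proof (rule ccontr)
    assume "maxroot p \<noteq> ?t"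
    then have "0 < poly p ?t"
      using poly_pos_above_maxroot[OF assms(1,5)] assms(11) by simp
    then have "0 < c * poly p ?t + (1 - c) * poly r ?t"
      using r_pos \<open>0 < c\<close> \<open>c < 1\<close> by (intro add_pos_pos mult_pos_pos) auto
    then show False
      using q_root comb[of ?t] by simp
  qed
  then have "poly p ?t = 0"
    using poly_maxroot_eq_0[OF assms(1,4,5)] by simp
  then show False
    using q_root r_pos comb[of ?t] \<open>c < 1\<close> by simp
qed

definition mean :: "real multiset \<Rightarrow> real" where
  "mean M = sum_mset M / size M"

lemma size_mult_less_sum_mset:
  fixes M :: "real multiset"
  assumes "\<forall>x\<in>#M. \<mu> \<le> x" "z \<in># M" "\<mu> < z"
  shows "real (size M) * \<mu> < sum_mset M"
proof -
  obtain N where M: "M = add_mset z N"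
    using assms(2) by (metis multi_member_split)
  have "real (size N) * \<mu> \<le> sum_mset N"
    using sum_mset_mono[of N "\<lambda>_. \<mu>" "\<lambda>x. x"] assms(1) M by auto
  then show ?thesis
    using assms(3) M by (simp add: algebra_simps)
qed

lemma exists_below_mean:
  assumes "z \<in># M" "z \<noteq> mean M"
  shows "\<exists>x\<in>#M. x < mean M"
proof (rule ccontr)
  assume "\<not> ?thesis"
  then have ge: "\<forall>x\<in>#M. mean M \<le> x"
    by (simp add: not_less)
  moreover have "mean M < z"
    using ge assms by (metis order_le_neq_trans)
  ultimately have "real (size M) * mean M < sum_mset M"
    using size_mult_less_sum_mset assms(1) by blast
  moreover have "size M \<noteq> 0"
    using assms(1) by auto
  ultimately show False
    by (simp add: mean_def)
qed

lemma exists_above_mean: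
  assumes "z \<in># M" "z \<noteq> mean M"
  shows "\<exists>y\<in>#M. mean M < y"
proof -
  have "sum_mset (image_mset uminus M) = - sum_mset M"
    by (induction M) simp_all
  then have mean_uminus: "mean (image_mset uminus M) = - mean M"
    by (simp add: mean_def)
  have "\<exists>x\<in>#image_mset uminus M. x < mean (image_mset uminus M)"
    using exists_below_mean[of "-z" "image_mset uminus M"] assms by (simp add: mean_uminus)
  then show ?thesis
    using mean_uminus by auto
qed

definition off_mean_count :: "real multiset \<Rightarrow> nat" where
  "off_mean_count M = size (filter_mset (\<lambda>z. z \<noteq> mean M) M)"

lemma off_mean_count_eq_0:
  "off_mean_count M = 0 \<Longrightarrow> M = replicate_mset (size M) (mean M)"
  by (rule set_mset_subset_singletonD) (auto simp: off_mean_count_def)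

lemma off_mean_count_replace_pair_less:
  assumes "x \<noteq> mean (N + {#x, y#})" "y \<noteq> mean (N + {#x, y#})" "x' + y' = x + y"
    and "x' = mean (N + {#x, y#}) \<or> y' = mean (N + {#x, y#})"
  shows "off_mean_count (N + {#x', y'#}) < off_mean_count (N + {#x, y#})"
proof -
  define \<mu> where "\<mu> = mean (N + {#x, y#})"
  have "mean (N + {#x', y'#}) = \<mu>"
    using assms(3) by (simp add: \<mu>_def mean_def add.assoc)
  then have "off_mean_count (N + {#x', y'#}) \<le> size (filter_mset (\<lambda>z. z \<noteq> \<mu>) N) + 1"
    using assms(4) unfolding \<mu>_def[symmetric] off_mean_count_def by auto
  moreover have "off_mean_count (N + {#x, y#}) = size (filter_mset (\<lambda>z. z \<noteq> \<mu>) N) + 2"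
    using assms(1,2) by (simp add: off_mean_count_def \<mu>_def)
  ultimately show ?thesis
    by linarith
qed

lemma mset_add_pair_split:
  assumes "x \<in># R" "y \<in># R" "x \<noteq> y"
  obtains S where "R = S + {#x, y#}"
proof -
  obtain R' where R': "R = add_mset x R'"
    using assms(1) by (metis multi_member_split)
  have "y \<in># R'"
    using assms(2,3) R' by auto
  then obtain S where "R' = add_mset y S"
    by (metis multi_member_split)
  then show thesis
    using R' that by auto
qed

locale max_root_problem =
  fixes d m :: nat and a b \<epsilon> :: real and T :: "real poly \<Rightarrow> real poly"
  assumes m_pos: "0 < m" and a_less_b: "a < b"
    and affine: "affine_op d m T"
    and real_rooted_T: "\<And>f. f \<in> MR d \<Longrightarrow> rooted_in {a..b} f \<Longrightarrow> real_rooted (T f)"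
begin

definition admissible :: "real multiset \<Rightarrow> bool" where
  "admissible R \<longleftrightarrow> size R = d \<and> set_mset R \<subseteq> {a..b} \<and> sum_mset R = \<epsilon>"

definition top_root :: "real multiset \<Rightarrow> real" where
  "top_root R = maxroot (T (root_poly R))"

definition maximal :: "real multiset \<Rightarrow> bool" where
  "maximal R \<longleftrightarrow> admissible R \<and> (\<forall>R'. admissible R' \<longrightarrow> top_root R' \<le> top_root R)"

definition interior_roots :: "real multiset \<Rightarrow> real multiset" where
  "interior_roots R = filter_mset (\<lambda>z. a < z \<and> z < b) R"

lemma admissible_iff:
  "f \<in> MR d \<and> rooted_in {a..b} f \<and> tr f = complex_of_real \<epsilon> \<longleftrightarrow> (\<exists>R. admissible R \<and> f = root_poly R)"
  using MR_rooted_in_iff[of f d "{a..b}"] by (auto simp: admissible_def tr_root_poly)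

lemma real_roots_interior: "{x. poly (root_poly R) x = 0 \<and> a < x \<and> x < b} = set_mset (interior_roots R)"
  using real_roots_root_poly[of R] by (auto simp: interior_roots_def)

lemma admissible_root_poly:
  assumes "admissible R"
  shows "root_poly R \<in> MR d" "rooted_in {a..b} (root_poly R)"
  using assms root_poly_in_MR[of R] by (auto simp: admissible_def rooted_in_root_poly_iff)

lemma poly_T_affine:
  assumes "f \<in> MR d" "g \<in> MR d"
  shows "poly (T (smult c f + smult (1 - c) g)) t = c * poly (T f) t + (1 - c) * poly (T g) t"
  using affine assms by (simp add: affine_op_def)

lemma T_root_poly:
  assumes "admissible R"
  shows "T (root_poly R) \<in> MR m" "real_rooted (T (root_poly R))"
  using admissible_root_poly[OF assms] affine real_rooted_T by (auto simp: affine_op_def)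

lemma admissible_replace_pair:
  assumes "admissible (S + {#x, y#})" "x' + y' = x + y" "x' \<in> {a..b}" "y' \<in> {a..b}"
  shows "admissible (S + {#x', y'#})"
  using assms by (auto simp: admissible_def)

lemma top_root_pair_le:
  assumes adm: "admissible (S + {#u1, v1#})" "admissible (S + {#u, v#})" "admissible (S + {#u2, v2#})"
    and sums: "u1 + v1 = u + v" "u2 + v2 = u + v"
    and products: "u1 * v1 < u * v" "u * v < u2 * v2"
    and "top_root (S + {#u1, v1#}) \<le> top_root (S + {#u, v#})"
  shows "top_root (S + {#u, v#}) \<le> top_root (S + {#u2, v2#})"
proof -
  \<comment> \<open>With the sum fixed, the root polynomial is affine in the product of the pair.\<close>
  define c where "c = (u2 * v2 - u * v) / (u2 * v2 - u1 * v1)"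
  have c: "0 < c" "c < 1"
    using products by (simp_all add: c_def field_simps)
  have "c * (u2 * v2 - u1 * v1) = u2 * v2 - u * v"
    using products by (simp add: c_def)
  then have "c * (u1 * v1) + (1 - c) * (u2 * v2) = u * v"
    by (simp add: algebra_simps)
  then have "smult c [:u1 * v1, -(u + v), 1:] + smult (1 - c) [:u2 * v2, -(u + v), 1:]
      = [:u * v, -(u + v), 1:]"
    by (simp add: algebra_simps)
  then have "root_poly (S + {#u, v#})
      = smult c (root_poly (S + {#u1, v1#})) + smult (1 - c) (root_poly (S + {#u2, v2#}))"
    unfolding root_poly_add_pair sums by (metis mult_smult_right distrib_left)
  then have "poly (T (root_poly (S + {#u, v#}))) t
      = c * poly (T (root_poly (S + {#u1, v1#}))) t + (1 - c) * poly (T (root_poly (S + {#u2, v2#}))) t" for t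
    using poly_T_affine admissible_root_poly(1) adm by simp
  then show ?thesis
    using maxroot_convex_combination[OF _ _ _ m_pos _ _ _ _ c] T_root_poly[OF adm(1)]
      T_root_poly[OF adm(2)] T_root_poly[OF adm(3)] assms(8)
    unfolding top_root_def by blast
qed

lemma top_root_le_squeeze:
  assumes adm: "admissible (S + {#x, y#})"
    and "0 < \<delta>" "a \<le> x - \<delta>" "y + \<delta> \<le> b" and "0 < \<eta>" "\<eta> < y - x"
    and "top_root (S + {#x - \<delta>, y + \<delta>#}) \<le> top_root (S + {#x, y#})"
  shows "top_root (S + {#x, y#}) \<le> top_root (S + {#x + \<eta>, y - \<eta>#})"
proof (rule top_root_pair_le[OF _ adm])
  have "x \<in> {a..b}" "y \<in> {a..b}"
    using adm by (auto simp: admissible_def)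
  show "admissible (S + {#x - \<delta>, y + \<delta>#})"
    by (rule admissible_replace_pair[OF adm]) (use assms \<open>x \<in> {a..b}\<close> \<open>y \<in> {a..b}\<close> in auto)
  show "admissible (S + {#x + \<eta>, y - \<eta>#})"
    by (rule admissible_replace_pair[OF adm]) (use assms \<open>x \<in> {a..b}\<close> \<open>y \<in> {a..b}\<close> in auto)
  have "0 < \<delta> * (y - x + \<delta>)" "0 < \<eta> * (y - x - \<eta>)"
    using assms by simp_all
  then show "(x - \<delta>) * (y + \<delta>) < x * y" "x * y < (x + \<eta>) * (y - \<eta>)"
    by (simp_all add: algebra_simps)
qed (use assms in simp_all)

lemma maximal_replicate_mean:
  assumes "maximal R" "set_mset R \<subseteq> {a<..<b}"
  shows "maximal (replicate_mset d (\<epsilon> / d))"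
  using assms
proof (induction "off_mean_count R" arbitrary: R rule: less_induct)
  case less
  then have adm: "admissible R"
    by (simp add: maximal_def)
  then have mean_R: "mean R = \<epsilon> / d"
    by (simp add: mean_def admissible_def)
  show ?case
  proof (cases "off_mean_count R = 0")
    case True
    then show ?thesis
      using off_mean_count_eq_0 less.prems(1) adm mean_R by (metis admissible_def)
  next
    case False
    then obtain z where "z \<in># R" "z \<noteq> mean R"
      by (auto simp: off_mean_count_def)
    then obtain x y where x: "x \<in># R" "x < mean R" and y: "y \<in># R" "mean R < y"
      using exists_below_mean exists_above_mean by blast
    then obtain S where S: "R = S + {#x, y#}"
      using mset_add_pair_split by (metis less_irrefl less_trans)
    have "a < x" "y < b"
      using less.prems(2) x y by auto
    define \<delta> where "\<delta> = min (x - a) (b - y)"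
    define \<eta> where "\<eta> = min (mean R - x) (y - mean R)"
    define R' where "R' = S + {#x + \<eta>, y - \<eta>#}"
    have "admissible (S + {#x - \<delta>, y + \<delta>#})"
      by (rule admissible_replace_pair) (use adm S x y \<open>a < x\<close> \<open>y < b\<close> in \<open>auto simp: \<delta>_def\<close>)
    then have "top_root (S + {#x - \<delta>, y + \<delta>#}) \<le> top_root R"
      using less.prems(1) by (simp add: maximal_def)
    then have "top_root R \<le> top_root R'"
      unfolding R'_def S
      by (rule top_root_le_squeeze[rotated -1]) (use adm S x y \<open>a < x\<close> \<open>y < b\<close> in \<open>auto simp: \<delta>_def \<eta>_def\<close>)
    moreover have R'_interior: "set_mset R' \<subseteq> {a<..<b}"
      using less.prems(2) S x y by (auto simp: R'_def \<eta>_def)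
    moreover have "admissible R'"
      unfolding R'_def by (rule admissible_replace_pair) (use adm S R'_interior in \<open>auto simp: R'_def\<close>)
    ultimately have "maximal R'"
      using less.prems(1) by (auto simp: maximal_def)
    moreover have "off_mean_count R' < off_mean_count R"
      unfolding R'_def S by (rule off_mean_count_replace_pair_less) (use x y S in \<open>auto simp: \<eta>_def\<close>)
    ultimately show ?thesis
      using less.hyps R'_interior by blast
  qed
qed

lemma exists_top_root_ge_fewer_interior:
  assumes adm: "admissible R" and "\<not> card (set_mset (interior_roots R)) \<le> 1"
  obtains R' where "admissible R'" "top_root R \<le> top_root R'"
    "size (interior_roots R') < size (interior_roots R) \<or>
     size (interior_roots R') = size (interior_roots R) \<and>
     off_mean_count (interior_roots R') < off_mean_count (interior_roots R)"
proof -
  define N where "N = interior_roots R"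
  obtain z1 z2 where "z1 \<in># N" "z2 \<in># N" "z1 \<noteq> z2"
    using assms(2) card_le_Suc0_iff_eq[of "set_mset N"] by (auto simp: N_def)
  then have "\<exists>z\<in>#N. z \<noteq> mean N"
    by metis
  then obtain x y where x: "x \<in># N" "x < mean N" and y: "y \<in># N" "mean N < y"
    using exists_below_mean exists_above_mean by blast
  then have xy: "x \<in># R" "a < x" "x < b" "y \<in># R" "a < y" "y < b"
    by (auto simp: N_def interior_roots_def)
  then obtain S where S: "R = S + {#x, y#}"
    using x y mset_add_pair_split by (metis less_irrefl less_trans)
  have N: "N = interior_roots S + {#x, y#}"
    using xy by (simp add: N_def S interior_roots_def)
  define \<delta> where "\<delta> = min (x - a) (b - y)"
  define \<eta> where "\<eta> = min (mean N - x) (y - mean N)"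
  define R1 where "R1 = S + {#x - \<delta>, y + \<delta>#}"
  define R2 where "R2 = S + {#x + \<eta>, y - \<eta>#}"
  have adm1: "admissible R1"
    unfolding R1_def by (rule admissible_replace_pair) (use adm S xy in \<open>auto simp: \<delta>_def\<close>)
  show thesis
  proof (cases "top_root R \<le> top_root R1")
    case True
    have "x - \<delta> = a \<or> y + \<delta> = b"
      by (auto simp: \<delta>_def min_def)
    then have "size (interior_roots R1) < size N"
      using N by (auto simp: R1_def interior_roots_def)
    then show thesis
      using that adm1 True by (simp add: N_def)
  next
    case False
    then have "top_root R1 \<le> top_root R"
      by simp
    then have "top_root R \<le> top_root R2"
      unfolding R1_def R2_def S
      by (rule top_root_le_squeeze[rotated -1])
        (use adm S x y xy in \<open>auto simp: \<delta>_def \<eta>_def\<close>)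
    moreover have "admissible R2"
      unfolding R2_def by (rule admissible_replace_pair) (use adm S x y xy in \<open>auto simp: \<eta>_def\<close>)
    moreover have N2: "interior_roots R2 = interior_roots S + {#x + \<eta>, y - \<eta>#}"
      using x y xy by (auto simp: R2_def interior_roots_def \<eta>_def)
    moreover have "off_mean_count (interior_roots R2) < off_mean_count N"
      unfolding N N2
      by (rule off_mean_count_replace_pair_less) (use x y N in \<open>auto simp: \<eta>_def\<close>)
    ultimately show thesis
      using that N by (simp add: N_def)
  qed
qed

lemma exists_few_interior_top_root_ge:
  "admissible R \<Longrightarrow>
    \<exists>R'. admissible R' \<and> card (set_mset (interior_roots R')) \<le> 1 \<and> top_root R \<le> top_root R'"
proof (induction R rule: wf_induct[OF wf_measures[of
      "[\<lambda>R. size (interior_roots R), \<lambda>R. off_mean_count (interior_roots R)]"]])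
  case (1 R)
  show ?case
  proof (cases "card (set_mset (interior_roots R)) \<le> 1")
    case False
    then obtain R' where R': "admissible R'" "top_root R \<le> top_root R'"
      "(R', R) \<in> measures [\<lambda>R. size (interior_roots R), \<lambda>R. off_mean_count (interior_roots R)]"
      using exists_top_root_ge_fewer_interior[OF "1.prems"] by auto
    then show ?thesis
      using "1.IH" order_trans by blast
  qed (use "1.prems" in blast)
qed

text \<open>In the image, k and l are the multiplicities of a and b in R; the remaining roots all equal w.\<close>

lemma interior_value_determined:
  assumes adm: "admissible R" and few: "card (set_mset (interior_roots R)) \<le> 1"
    and w: "w \<in># R" "a < w" "w < b"
  shows "w \<in> (\<lambda>(k, l). (\<epsilon> - real k * a - real l * b) / (real d - real k - real l)) ` ({..d} \<times> {..d})"
proof -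
  have only: "v = a \<or> v = b \<or> v = w" if "v \<in># R" for v
  proof -
    have "v \<in># interior_roots R" if "v \<noteq> a" "v \<noteq> b"
      using adm \<open>v \<in># R\<close> that by (force simp: admissible_def interior_roots_def)
    moreover have "w \<in># interior_roots R"
      using w by (simp add: interior_roots_def)
    ultimately show ?thesis
      using few card_le_Suc0_iff_eq[of "set_mset (interior_roots R)"] by auto
  qed
  define k l j where "k = count R a" and "l = count R b" and "j = count R w"
  have R: "R = replicate_mset k a + replicate_mset l b + replicate_mset j w"
  proof (rule multiset_eqI)
    fix v
    show "count R v = count (replicate_mset k a + replicate_mset l b + replicate_mset j w) v"
      using only[of v] w a_less_b by (cases "v \<in># R") (auto simp: k_def l_def j_def not_in_iff)
  qed
  have "k + l + j = d" "real k * a + real l * b + real j * w = \<epsilon>"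
    using adm by (simp_all add: admissible_def R)
  moreover have "0 < j"
    using w by (simp add: j_def)
  ultimately have "w = (\<epsilon> - real k * a - real l * b) / (real d - real k - real l)" "k \<le> d" "l \<le> d"
    by (auto simp: field_simps)
  then show ?thesis
    by force
qed

lemma finite_few_interior: "finite {R. admissible R \<and> card (set_mset (interior_roots R)) \<le> 1}"
proof (rule finite_subset)
  let ?V = "{a, b} \<union> (\<lambda>(k, l). (\<epsilon> - real k * a - real l * b) / (real d - real k - real l)) ` ({..d} \<times> {..d})"
  show "finite (multisets_of_size ?V d)"
    by (rule finite_multisets_of_size) simp
  show "{R. admissible R \<and> card (set_mset (interior_roots R)) \<le> 1} \<subseteq> multisets_of_size ?V d"
    using interior_value_determined
    by (fastforce simp: multisets_of_size_def admissible_def)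
qed

lemma exists_maximal_few_interior:
  assumes "admissible R0"
  obtains R where "maximal R" "card (set_mset (interior_roots R)) \<le> 1"
proof -
  define C where "C = {R. admissible R \<and> card (set_mset (interior_roots R)) \<le> 1}"
  have "C \<noteq> {}"
    using exists_few_interior_top_root_ge[OF assms] by (auto simp: C_def)
  moreover have "finite C"
    using finite_few_interior by (simp add: C_def)
  ultimately have "Max (top_root ` C) \<in> top_root ` C"
    by (intro Max_in) auto
  then obtain R where R: "R \<in> C" "top_root R = Max (top_root ` C)"
    by (metis imageE)
  have "maximal R"
    unfolding maximal_def
  proof (intro conjI allI impI)
    show "admissible R"
      using R by (simp add: C_def)
    fix R' assume "admissible R'"
    then obtain R'' where "R'' \<in> C" "top_root R' \<le> top_root R''"
      using exists_few_interior_top_root_ge by (auto simp: C_def)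
    moreover have "top_root R'' \<le> Max (top_root ` C)"
      using \<open>R'' \<in> C\<close> \<open>finite C\<close> by (intro Max_ge) auto
    ultimately show "top_root R' \<le> top_root R"
      using R(2) by linarith
  qed
  then show thesis
    using that R by (simp add: C_def)
qed
end

theorem lemma6p9:
  fixes d m :: nat and a b \<epsilon> :: real and T :: "real poly \<Rightarrow> real poly"
    and \<A> :: "real poly set"
  assumes "d > 0" and "m > 0" and "a < b" and "\<epsilon> > 0"
    and "affine_op d m T"
    and "\<forall>f\<in>MR d. rooted_in {a..b} f \<longrightarrow> real_rooted (T f)"
    and A_def: "\<A> = {f \<in> MR d. rooted_in {a..b} f \<and> tr f = complex_of_real \<epsilon>}"
    and "\<A> \<noteq> {}"
  shows "(\<exists>f\<in>\<A>. card {x. poly f x = 0 \<and> a < x \<and> x < b} \<le> 1 \<and>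
            (\<forall>g\<in>\<A>. maxroot (T g) \<le> maxroot (T f)))
       \<and> ((\<exists>f\<in>\<A>. rooted_in {a<..<b} f \<and> (\<forall>g\<in>\<A>. maxroot (T g) \<le> maxroot (T f)))
           \<longrightarrow> (\<forall>g\<in>\<A>. maxroot (T g) \<le> maxroot (T ([:- \<epsilon> / real d, 1:] ^ d))))"
proof -
  interpret max_root_problem d m a b \<epsilon> T
    using assms by unfold_locales auto
  have A: "\<A> = root_poly ` Collect admissible"
    using admissible_iff by (auto simp: A_def)
  have maximal_iff: "maximal R \<longleftrightarrow> admissible R \<and> (\<forall>g\<in>\<A>. maxroot (T g) \<le> maxroot (T (root_poly R)))" for R
    by (auto simp: A maximal_def top_root_def)
  obtain R0 where "admissible R0"
    using \<open>\<A> \<noteq> {}\<close> A by auto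
  then obtain R where "maximal R" "card (set_mset (interior_roots R)) \<le> 1"
    by (rule exists_maximal_few_interior)
  then have few_interior_maximiser: "\<exists>f\<in>\<A>. card {x. poly f x = 0 \<and> a < x \<and> x < b} \<le> 1 \<and>
      (\<forall>g\<in>\<A>. maxroot (T g) \<le> maxroot (T f))"
    using A maximal_iff real_roots_interior by (intro bexI[of _ "root_poly R"]) (auto simp: maximal_def)
  have "\<forall>g\<in>\<A>. maxroot (T g) \<le> maxroot (T ([:- \<epsilon> / real d, 1:] ^ d))"
    if "f \<in> \<A>" "rooted_in {a<..<b} f" "\<forall>g\<in>\<A>. maxroot (T g) \<le> maxroot (T f)" for f
  proof -
    obtain R where R: "admissible R" "f = root_poly R"
      using \<open>f \<in> \<A>\<close> A by auto
    have "maximal R"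
      unfolding maximal_iff using R that(3) by simp
    moreover have "set_mset R \<subseteq> {a<..<b}"
      using R(2) that(2) rooted_in_root_poly_iff by simp
    ultimately have "maximal (replicate_mset d (\<epsilon> / d))"
      by (rule maximal_replicate_mean)
    then show ?thesis
      unfolding maximal_iff by (simp add: root_poly_replicate_mset)
  qed
  with few_interior_maximiser show ?thesis
    by blast
qed

end
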